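(* Let $n\ge 4$, $N=\{1,\dots,n\}$, fix $i_1\in N$ and let $\hat N^c=N\setminus\{i_1\}$. Then the inequality $$\sum_{j\in\hat N^c}\left(x_{i_1j}+x_{ji_1}\right)-\sum_{j,j'\in\hat N^c:\,j\ne j'} x_{jj'}\le 2-\frac{(n-2)(n-3)}{2}$$ is a valid inequality for the weak order polytope $P^n_{WO}$, i.e. it holds for every point $x\in P^n_{WO}$.
   Context: Let $N=\{1,\dots,n\}$ and $A_N=\{(i,j): i,j\in N, i\ne j\}$. A weak order on $N$ is a binary relation $W\subseteq N\times N$ that is reflexive, transitive and total; $(i,j)\in W$ is read "$i$ is preferred over or tied with $j$". The characteristic vector of $W$ is $x^W\in\{0,1\}^{A_N}$ with $x^W_{(i,j)}=1$ if $(i,j)\in W$ and $0$ otherwise. The weak order polytope $P^n_{WO}$ is the convex hull of the characteristic vectors of all weak orders on $N$; its points are vectors $x\in\mathbb{R}^{A_N}$ and $x_{ij}$ denotes the coordinate $x_{(i,j)}$. *)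

theory Defs
  imports "HOL-Analysis.Analysis"
begin

definition arcs :: "nat \<Rightarrow> (nat \<times> nat) set" where
  "arcs n = {(i, j). i \<in> {1..n} \<and> j \<in> {1..n} \<and> i \<noteq> j}"

definition weak_order :: "nat \<Rightarrow> (nat \<times> nat) set \<Rightarrow> bool" where
  "weak_order n W \<longleftrightarrow> W \<subseteq> {1..n} \<times> {1..n} \<and> refl_on {1..n} W \<and> trans W \<and> total_on {1..n} W"

text \<open>Characteristic vector in R^{A_N}; represented as a function on pairs which is
  zero outside A_N (coordinates outside A_N are not part of the space).\<close>

definition char_vec :: "nat \<Rightarrow> (nat \<times> nat) set \<Rightarrow> (nat \<times> nat \<Rightarrow> real)" where
  "char_vec n W = (\<lambda>a. if a \<in> arcs n \<and> a \<in> W then 1 else 0)"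

definition weak_order_polytope :: "nat \<Rightarrow> (nat \<times> nat \<Rightarrow> real) set" where
  "weak_order_polytope n =
     {x. \<exists>F c. finite F \<and> F \<subseteq> {W. weak_order n W} \<and> (\<forall>W\<in>F. 0 \<le> c W) \<and>
           sum c F = 1 \<and> x = (\<lambda>a. \<Sum>W\<in>F. c W * char_vec n W a)}"

end

theory Submission
  imports Defs
begin

(* The left-hand side is linear in x, so it suffices to check the vertices, i.e. weak orders W.
   Let m = n - 1 and let k be the number of j tied with i1 in W. Every j is comparable with i1,
   so the first sum is m + k. Every pair {j, j'} avoiding i1 contributes at least 1 to the second
   sum, and 2 if both are tied with i1 (then they are tied with each other), so the second sum is
   at least m(m-1)/2 + k(k-1)/2. Hence the left-hand side is at most
   1 - (m-1)(m-2)/2 + (k - k(k-1)/2), and k - k(k-1)/2 <= 1 because (k-1)(k-2) >= 0 for every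
   integer k. *)

definition off_diagonal :: "'a set \<Rightarrow> ('a \<times> 'a) set" where
  "off_diagonal A = {(a, b). a \<in> A \<and> b \<in> A \<and> a \<noteq> b}"

lemma off_diagonal_mono: "A \<subseteq> B \<Longrightarrow> off_diagonal A \<subseteq> off_diagonal B"
  unfolding off_diagonal_def by auto

lemma off_diagonal_eq_Sigma: "off_diagonal A = Sigma A (\<lambda>a. A - {a})"
  unfolding off_diagonal_def by auto

lemma finite_off_diagonal: "finite A \<Longrightarrow> finite (off_diagonal A)"
  unfolding off_diagonal_eq_Sigma by (intro finite_SigmaI) auto

lemma card_off_diagonal:
  assumes "finite A"
  shows "card (off_diagonal A) = card A * (card A - 1)"
  using assms unfolding off_diagonal_eq_Sigma by simp

lemma sum_off_diagonal_swap:
  "(\<Sum>p\<in>off_diagonal A. f (prod.swap p)) = (\<Sum>p\<in>off_diagonal A. f p)"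
proof -
  have "prod.swap ` off_diagonal A = off_diagonal A"
    unfolding off_diagonal_def by force
  then show ?thesis
    using sum.reindex[of prod.swap "off_diagonal A" f] by simp
qed

lemma star_minus_off_diagonal_le:
  fixes R :: "('a \<times> 'a) set"
  assumes fin: "finite M" and i: "i \<notin> M"
    and total: "total_on (insert i M) R" and trans: "trans R"
  shows "(\<Sum>j\<in>M. of_bool ((i, j) \<in> R) + of_bool ((j, i) \<in> R))
           - (\<Sum>p\<in>off_diagonal M. of_bool (p \<in> R))
         \<le> 2 - (real (card M) - 1) * (real (card M) - 2) / (2::real)"
proof -
  define K where "K = {j \<in> M. (i, j) \<in> R \<and> (j, i) \<in> R}"
  have "K \<subseteq> M" unfolding K_def by blast
  have comparable: "(a, b) \<in> R \<or> (b, a) \<in> R"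
    if "a \<in> insert i M" "b \<in> insert i M" "a \<noteq> b" for a b
    using total that unfolding total_on_def by blast
  have "of_bool ((i, j) \<in> R) + of_bool ((j, i) \<in> R) = 1 + (of_bool (j \<in> K) :: real)"
    if "j \<in> M" for j
    using comparable[of i j] that i unfolding K_def by auto
  then have star: "(\<Sum>j\<in>M. of_bool ((i, j) \<in> R) + of_bool ((j, i) \<in> R))
      = real (card M) + real (card K)"
    using fin \<open>K \<subseteq> M\<close> by (simp add: sum.distrib Int_absorb1)
  have pair:
    "1 + of_bool (p \<in> off_diagonal K) \<le> of_bool (p \<in> R) + (of_bool (prod.swap p \<in> R) :: real)"
    if "p \<in> off_diagonal M" for p
  proof (cases "p \<in> off_diagonal K")
    case True
    then obtain a b where p: "p = (a, b)"
      and "(a, i) \<in> R" "(i, b) \<in> R" "(b, i) \<in> R" "(i, a) \<in> R"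
      unfolding off_diagonal_def K_def by blast
    then have "(a, b) \<in> R" "(b, a) \<in> R"
      using trans by (blast dest: transD)+
    then show ?thesis by (simp add: p)
  next
    case False
    from that obtain a b where "p = (a, b)" "a \<in> M" "b \<in> M" "a \<noteq> b"
      unfolding off_diagonal_def by blast
    then show ?thesis
      using False comparable[of a b] by auto
  qed
  have "real (card M) * (real (card M) - 1) + real (card K) * (real (card K) - 1)
      = (\<Sum>p\<in>off_diagonal M. 1 + of_bool (p \<in> off_diagonal K))"
  proof -
    have pred: "real (m * (m - 1)) = real m * (real m - 1)" for m :: nat
      by (cases m) (auto simp: algebra_simps)
    show ?thesis
      using fin \<open>K \<subseteq> M\<close> finite_subset[OF \<open>K \<subseteq> M\<close> fin]
      by (simp add: sum.distrib finite_off_diagonal card_off_diagonal Int_absorb1 off_diagonal_mono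
          flip: pred)
  qed
  also have "\<dots> \<le> (\<Sum>p\<in>off_diagonal M. of_bool (p \<in> R) + of_bool (prod.swap p \<in> R))"
    using pair by (rule sum_mono)
  also have "\<dots> = 2 * (\<Sum>p\<in>off_diagonal M. of_bool (p \<in> R))"
    by (simp add: sum.distrib sum_off_diagonal_swap[of "\<lambda>p. of_bool (p \<in> R)"])
  finally have off: "real (card M) * (real (card M) - 1) + real (card K) * (real (card K) - 1)
      \<le> 2 * (\<Sum>p\<in>off_diagonal M. of_bool (p \<in> R))" .
  have "0 \<le> (real (card K) - 1) * (real (card K) - 2)"
    by (cases "card K \<le> 1") (auto intro: mult_nonpos_nonpos mult_nonneg_nonneg)
  then show ?thesis
    using off unfolding star by (simp add: field_simps)
qed

lemma char_vec_eq_of_bool: "a \<in> arcs n \<Longrightarrow> char_vec n W a = of_bool (a \<in> W)"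
  unfolding char_vec_def by simp

lemma weak_order_star_minus_off_diagonal_le:
  assumes W: "weak_order n W" and i: "i \<in> {1..n}"
  shows "(\<Sum>j\<in>{1..n} - {i}. char_vec n W (i, j) + char_vec n W (j, i))
           - (\<Sum>p\<in>off_diagonal ({1..n} - {i}). char_vec n W p)
         \<le> 2 - (real n - 2) * (real n - 3) / 2"
proof -
  let ?M = "{1..n} - {i}"
  have "total_on (insert i ?M) W" "trans W"
    using W i unfolding weak_order_def by (auto simp: insert_absorb)
  have "(\<Sum>j\<in>?M. char_vec n W (i, j) + char_vec n W (j, i))
           - (\<Sum>p\<in>off_diagonal ?M. char_vec n W p)
      = (\<Sum>j\<in>?M. of_bool ((i, j) \<in> W) + of_bool ((j, i) \<in> W))
           - (\<Sum>p\<in>off_diagonal ?M. of_bool (p \<in> W))"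
    using i by (auto intro!: sum.cong arg_cong2[where f = minus]
        simp: char_vec_eq_of_bool arcs_def off_diagonal_def)
  also have "\<dots> \<le> 2 - (real (card ?M) - 1) * (real (card ?M) - 2) / 2"
    using \<open>total_on (insert i ?M) W\<close> \<open>trans W\<close> by (intro star_minus_off_diagonal_le) auto
  also have "real (card ?M) = real n - 1"
    using i by simp
  finally show ?thesis
    by (simp add: algebra_simps)
qed

lemma weak_order_polytope_le:
  assumes x: "x \<in> weak_order_polytope n"
    and linear_comb: "\<And>F c v. finite (F :: (nat \<times> nat) set set) \<Longrightarrow>
      L (\<lambda>a. \<Sum>W\<in>F. c W * v W a) = (\<Sum>W\<in>F. c W * L (v W))"
    and vertex: "\<And>W. weak_order n W \<Longrightarrow> L (char_vec n W) \<le> b"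
  shows "L x \<le> b"
proof -
  obtain F c where F: "finite F" "F \<subseteq> {W. weak_order n W}" "\<forall>W\<in>F. 0 \<le> c W" "sum c F = 1"
    and x_eq: "x = (\<lambda>a. \<Sum>W\<in>F. c W * char_vec n W a)"
    using x unfolding weak_order_polytope_def by blast
  have "L x = (\<Sum>W\<in>F. c W * L (char_vec n W))"
    using linear_comb[OF \<open>finite F\<close>] x_eq by simp
  also have "\<dots> \<le> (\<Sum>W\<in>F. c W * b)"
    using F vertex by (intro sum_mono mult_left_mono) auto
  also have "\<dots> = b"
    using F(4) by (simp flip: sum_distrib_right)
  finally show ?thesis .
qed

theorem mainTheorem1:
  fixes n i1 :: nat and x :: "nat \<times> nat \<Rightarrow> real"
  assumes "n \<ge> 4" and "i1 \<in> {1..n}"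
    and "x \<in> weak_order_polytope n"
  shows "(\<Sum>j\<in>{1..n} - {i1}. x (i1, j) + x (j, i1))
           - (\<Sum>(j, j')\<in>{(j, j'). j \<in> {1..n} - {i1} \<and> j' \<in> {1..n} - {i1} \<and> j \<noteq> j'}. x (j, j'))
         \<le> 2 - real ((n - 2) * (n - 3)) / 2"
proof -
  define L where "L y = (\<Sum>j\<in>{1..n} - {i1}. y (i1, j) + y (j, i1))
      - (\<Sum>p\<in>off_diagonal ({1..n} - {i1}). y p)" for y :: "nat \<times> nat \<Rightarrow> real"
  have "L x \<le> 2 - (real n - 2) * (real n - 3) / 2"
  proof (rule weak_order_polytope_le[OF assms(3)])
    show "L (\<lambda>a. \<Sum>W\<in>F. c W * v W a) = (\<Sum>W\<in>F. c W * L (v W))"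
      for F :: "(nat \<times> nat) set set" and c v
      unfolding L_def by (simp add: sum_subtractf sum.distrib sum_distrib_left algebra_simps
          sum.swap[of _ F])
    show "L (char_vec n W) \<le> 2 - (real n - 2) * (real n - 3) / 2" if "weak_order n W" for W
      unfolding L_def using weak_order_star_minus_off_diagonal_le[OF that assms(2)] .
  qed
  moreover have "real ((n - 2) * (n - 3)) = (real n - 2) * (real n - 3)"
    using assms(1) by simp
  ultimately show ?thesis
    by (simp add: L_def off_diagonal_def case_prod_beta)
qed

end
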